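(* For natural numbers $n\ge1$, $k\ge 3$ and $k_1,\dots,k_n\ge 3$, the total domination polynomials of the lollipop graph $L(n,1)$, of the firecracker graph $F(n,k)$, and of the generalized firecracker graph $F(k_1,\dots,k_n)$ are unimodal.
   Context: $L(n,1)$ is the complete graph $K_n$ with one extra vertex joined by a pendant edge to one vertex of $K_n$. For $k\ge 3$, $S_k$ denotes the star with $k$ vertices ($K_{1,k-1}$). The generalized firecracker $F(k_1,\dots,k_n)$ is obtained from stars $S_{k_1},\dots,S_{k_n}$ by choosing one leaf $\ell_i$ of $S_{k_i}$ for each $i$ and adding the edges $\ell_i\ell_{i+1}$ ($1\le i<n$); $F(n,k)=F(k,\dots,k)$ ($n$ copies). For a finite simple graph $G=(V,E)$, a set $D\subseteq V$ is a total dominating set if every vertex of $V$ is adjacent to some vertex of $D$; $d_t(G,i)$ is the number of total dominating sets of size $i$, and $D_t(G,x)=\sum_{i} d_t(G,i)x^i$. A polynomial $\sum a_ix^i$ is unimodal if its coefficient sequence $a_0,\dots,a_N$ satisfies $a_0\le\dots\le a_k\ge a_{k+1}\ge\dots\ge a_N$ for some $k$. *)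

theory Defs
  imports "HOL-Computational_Algebra.Polynomial"
begin

text \<open>A finite simple graph is given by a vertex set V and a symmetric irreflexive
adjacency predicate E (on V).\<close>

definition is_total_dom_set :: "'a set \<Rightarrow> ('a \<Rightarrow> 'a \<Rightarrow> bool) \<Rightarrow> 'a set \<Rightarrow> bool" where
  "is_total_dom_set V E D \<longleftrightarrow> D \<subseteq> V \<and> (\<forall>v\<in>V. \<exists>u\<in>D. E v u)"

definition d_t :: "'a set \<Rightarrow> ('a \<Rightarrow> 'a \<Rightarrow> bool) \<Rightarrow> nat \<Rightarrow> nat" where
  "d_t V E i = card {D. is_total_dom_set V E D \<and> card D = i}"

definition total_dom_poly :: "'a set \<Rightarrow> ('a \<Rightarrow> 'a \<Rightarrow> bool) \<Rightarrow> nat poly" where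
  "total_dom_poly V E = (\<Sum>i\<le>card V. monom (d_t V E i) i)"

definition unimodal :: "nat poly \<Rightarrow> bool" where
  "unimodal p \<longleftrightarrow> (\<exists>k. (\<forall>i j. i \<le> j \<and> j \<le> k \<longrightarrow> coeff p i \<le> coeff p j)
                     \<and> (\<forall>i j. k \<le> i \<and> i \<le> j \<and> j \<le> degree p \<longrightarrow> coeff p j \<le> coeff p i))"

text \<open>Lollipop L(n,1): vertices 0..n; 0..n-1 form K_n, vertex n is pendant at vertex 0.\<close>
definition lollipop_V :: "nat \<Rightarrow> nat set" where
  "lollipop_V n = {0..n}"

definition lollipop_E :: "nat \<Rightarrow> nat \<Rightarrow> nat \<Rightarrow> bool" where
  "lollipop_E n u v \<longleftrightarrow> u \<in> {0..n} \<and> v \<in> {0..n} \<and> u \<noteq> v \<and>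
     ((u < n \<and> v < n) \<or> (u = n \<and> v = 0) \<or> (u = 0 \<and> v = n))"

text \<open>Generalized firecracker F(k_1,...,k_n), ks = [k_1,...,k_n]: star i has centre (i,0)
and leaves (i,j), 1 \<le> j < k_i; the chosen leaf of star i is (i,1); leaves (i,1),(i+1,1) are joined.\<close>
definition firecracker_V :: "nat list \<Rightarrow> (nat \<times> nat) set" where
  "firecracker_V ks = {(i, j). i < length ks \<and> j < ks ! i}"

definition firecracker_E :: "nat list \<Rightarrow> nat \<times> nat \<Rightarrow> nat \<times> nat \<Rightarrow> bool" where
  "firecracker_E ks x y \<longleftrightarrow> x \<in> firecracker_V ks \<and> y \<in> firecracker_V ks \<and>
     ((fst x = fst y \<and> ((snd x = 0 \<and> snd y \<ge> 1) \<or> (snd y = 0 \<and> snd x \<ge> 1)))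
      \<or> (snd x = 1 \<and> snd y = 1 \<and> (fst y = fst x + 1 \<or> fst x = fst y + 1)))"

end

(* A set is a total dominating set of the lollipop L(n,1), resp. of a firecracker whose stars
   have at least three vertices, iff it contains the centre of every star together with at
   least one leaf of it (the lollipop being the star with centre 0 and leaves 1..n).  So the
   total domination polynomial is x((1+x)^n - 1), resp. the product of the star factors
   x((1+x)^(k_i - 1) - 1).  The coefficient sequence of each factor is a shifted, truncated
   binomial sequence, hence a Polya frequency sequence of order 2 (all 2x2 minors of its
   Toeplitz matrix are nonnegative).  This property is preserved under products by the
   Cauchy-Binet formula, and for nonnegative sequences it implies unimodality. *)

theory Submission
  imports Defs
begin

section \<open>Polya frequency sequences of order 2\<close>

definition int_coeff :: "nat poly \<Rightarrow> int \<Rightarrow> int" where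
  "int_coeff p z = (if z < 0 then 0 else int (coeff p (nat z)))"

definition pf2 :: "(int \<Rightarrow> int) \<Rightarrow> bool" where
  "pf2 f \<longleftrightarrow> (\<forall>i j s t. i \<le> j \<longrightarrow> s \<le> t \<longrightarrow> f (i - t) * f (j - s) \<le> f (i - s) * f (j - t))"

lemma int_coeff_nonneg: "int_coeff p z \<ge> 0"
  by (simp add: int_coeff_def)

lemma int_coeff_mult: "int_coeff (p * q) m = (\<Sum>r\<in>{0..m}. int_coeff p r * int_coeff q (m - r))"
proof (cases "m < 0")
  case True
  then show ?thesis by (simp add: int_coeff_def)
next
  case False
  then obtain n where m: "m = int n" by (metis nonneg_int_cases not_less)
  have "(\<Sum>r\<in>{0..m}. int_coeff p r * int_coeff q (m - r))
      = (\<Sum>r\<in>int ` {0..n}. int_coeff p r * int_coeff q (m - r))"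
    by (simp add: m image_int_atLeastAtMost)
  also have "\<dots> = (\<Sum>i\<in>{0..n}. int_coeff p (int i) * int_coeff q (int n - int i))"
    by (subst sum.reindex) (auto simp: m)
  also have "\<dots> = (\<Sum>i\<in>{0..n}. int (coeff p i * coeff q (n - i)))"
    by (rule sum.cong) (auto simp: int_coeff_def of_nat_diff nat_diff_distrib)
  also have "\<dots> = int_coeff (p * q) m"
    by (simp add: int_coeff_def m coeff_mult atMost_atLeast0)
  finally show ?thesis ..
qed

lemma int_coeff_mult_window:
  assumes "finite S" "{u..i} \<subseteq> S"
  shows "int_coeff (p * q) (i - u) = (\<Sum>s\<in>S. int_coeff p (i - s) * int_coeff q (s - u))"
proof -
  have "(\<Sum>s\<in>S. int_coeff p (i - s) * int_coeff q (s - u))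
      = (\<Sum>s\<in>{u..i}. int_coeff p (i - s) * int_coeff q (s - u))"
    by (rule sum.mono_neutral_right) (use assms in \<open>auto simp: int_coeff_def\<close>)
  also have "{u..i} = (\<lambda>r. i - r) ` {0..i - u}"
    by (auto simp: image_iff intro!: bexI[where x="i - x" for x])
  also have "(\<Sum>s\<in>(\<lambda>r. i - r) ` {0..i - u}. int_coeff p (i - s) * int_coeff q (s - u))
      = (\<Sum>r\<in>{0..i - u}. int_coeff p r * int_coeff q (i - u - r))"
    by (subst sum.reindex) (auto simp: inj_on_def algebra_simps intro!: sum.cong)
  finally show ?thesis by (simp add: int_coeff_mult)
qed

text \<open>The two-row case of the Cauchy--Binet formula: symmetrising the double sum over
  \<open>(s, t)\<close> pairs every term with its transpose, and each such pair is a product of two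
  \<open>2 \<times> 2\<close> minors of the same sign.\<close>
lemma sum_mult_sum_le_of_minors:
  fixes a a' b b' :: "'a :: linorder \<Rightarrow> int"
  assumes "finite S"
    and a: "\<And>s t. s \<le> t \<Longrightarrow> a t * a' s \<le> a s * a' t"
    and b: "\<And>s t. s \<le> t \<Longrightarrow> b' s * b t \<le> b s * b' t"
  shows "(\<Sum>s\<in>S. a s * b' s) * (\<Sum>s\<in>S. a' s * b s) \<le> (\<Sum>s\<in>S. a s * b s) * (\<Sum>s\<in>S. a' s * b' s)"
proof -
  define f where "f s t = a s * a' t * (b s * b' t - b' s * b t)" for s t
  have diff: "(\<Sum>s\<in>S. a s * b s) * (\<Sum>s\<in>S. a' s * b' s) - (\<Sum>s\<in>S. a s * b' s) * (\<Sum>s\<in>S. a' s * b s)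
        = (\<Sum>s\<in>S. \<Sum>t\<in>S. f s t)"
    by (simp add: f_def sum_product sum_subtractf[symmetric] algebra_simps)
  have pair_nonneg: "f s t + f t s \<ge> 0" for s t
  proof -
    have eq: "f s t + f t s = (a s * a' t - a t * a' s) * (b s * b' t - b' s * b t)"
      by (simp add: f_def algebra_simps)
    show ?thesis
    proof (cases "s \<le> t")
      case True
      then show ?thesis unfolding eq using a[OF True] b[OF True] by simp
    next
      case False
      then have "t \<le> s" by simp
      then show ?thesis unfolding eq using a[OF \<open>t \<le> s\<close>] b[OF \<open>t \<le> s\<close>]
        by (intro mult_nonpos_nonpos) (auto simp: algebra_simps)
    qed
  qed
  have "2 * (\<Sum>s\<in>S. \<Sum>t\<in>S. f s t) = (\<Sum>s\<in>S. \<Sum>t\<in>S. f s t + f t s)"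
    by (simp add: sum.distrib sum.swap[of f])
  also have "\<dots> \<ge> 0" by (intro sum_nonneg pair_nonneg)
  finally show ?thesis using diff by linarith
qed

lemma pf2_mult:
  assumes "pf2 (int_coeff p)" "pf2 (int_coeff q)"
  shows "pf2 (int_coeff (p * q))"
  unfolding pf2_def
proof (intro allI impI)
  fix i j u v :: int
  assume ij: "i \<le> j" and uv: "u \<le> v"
  let ?S = "{u..j}"
  have window: "int_coeff (p * q) (y - x) = (\<Sum>s\<in>?S. int_coeff p (y - s) * int_coeff q (s - x))"
    if "u \<le> x" "y \<le> j" for x y
    using that by (intro int_coeff_mult_window) auto
  show "int_coeff (p * q) (i - v) * int_coeff (p * q) (j - u)
      \<le> int_coeff (p * q) (i - u) * int_coeff (p * q) (j - v)"
    unfolding window[OF uv ij] window[OF order_refl order_refl] window[OF order_refl ij]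
      window[OF uv order_refl]
  proof (rule sum_mult_sum_le_of_minors)
    fix s t :: int
    assume "s \<le> t"
    show "int_coeff p (i - t) * int_coeff p (j - s) \<le> int_coeff p (i - s) * int_coeff p (j - t)"
      using assms(1) ij \<open>s \<le> t\<close> unfolding pf2_def by blast
    show "int_coeff q (s - v) * int_coeff q (t - u) \<le> int_coeff q (s - u) * int_coeff q (t - v)"
      using assms(2) uv \<open>s \<le> t\<close> unfolding pf2_def by blast
  qed simp
qed

lemma pf2_interval_indicator: "pf2 (\<lambda>z. if a \<le> z \<and> z \<le> b then 1 else 0)"
  unfolding pf2_def by auto

lemma pf2_int_coeff_1: "pf2 (int_coeff 1)"
proof -
  have "int_coeff 1 = (\<lambda>z. if 0 \<le> z \<and> z \<le> 0 then 1 else 0)"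
    by (auto simp: int_coeff_def fun_eq_iff)
  then show ?thesis by (simp add: pf2_interval_indicator)
qed

lemma pf2_int_coeff_X: "pf2 (int_coeff (monom 1 1))"
proof -
  have "int_coeff (monom 1 1) = (\<lambda>z. if 1 \<le> z \<and> z \<le> 1 then 1 else 0)"
    by (auto simp: int_coeff_def fun_eq_iff coeff_monom)
  then show ?thesis by (simp add: pf2_interval_indicator)
qed

lemma pf2_int_coeff_binomial: "pf2 (int_coeff ([:1, 1:] ^ m))"
proof (induction m)
  case 0
  then show ?case by (simp add: pf2_int_coeff_1)
next
  case (Suc m)
  have "int_coeff [:1, 1:] = (\<lambda>z. if 0 \<le> z \<and> z \<le> 1 then 1 else 0)"
    by (auto simp: int_coeff_def fun_eq_iff coeff_pCons split: nat.splits)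
  then have "pf2 (int_coeff [:1, 1:])"
    by (simp only: pf2_interval_indicator)
  then show ?case
    unfolding power_Suc using Suc.IH by (rule pf2_mult)
qed

lemma pf2_truncate:
  assumes "pf2 f" "\<And>z. f z \<ge> 0"
  shows "pf2 (\<lambda>z. if c \<le> z then f z else 0)"
  unfolding pf2_def
proof (intro allI impI)
  fix i j s t :: int
  assume st: "i \<le> j" "s \<le> t"
  show "(if c \<le> i - t then f (i - t) else 0) * (if c \<le> j - s then f (j - s) else 0)
        \<le> (if c \<le> i - s then f (i - s) else 0) * (if c \<le> j - t then f (j - t) else 0)"
  proof (cases "c \<le> i - t")
    case True
    then have "c \<le> i - s" "c \<le> j - s" "c \<le> j - t" using st by linarith+
    moreover have "f (i - t) * f (j - s) \<le> f (i - s) * f (j - t)"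
      using st assms(1) unfolding pf2_def by blast
    ultimately show ?thesis using True by simp
  next
    case False
    then show ?thesis using assms(2) by simp
  qed
qed

lemma pf2_coeff_le:
  assumes "pf2 (int_coeff p)" "a \<le> x" "x \<le> b"
  shows "coeff p a * coeff p b \<le> coeff p x * coeff p (a + b - x)"
proof -
  have "int_coeff p (int x - (int x - int a)) * int_coeff p (int b - 0)
      \<le> int_coeff p (int x - 0) * int_coeff p (int b - (int x - int a))"
    using assms unfolding pf2_def by (meson diff_ge_0_iff_ge of_nat_le_iff order.trans)
  moreover have "nat (int b - (int x - int a)) = a + b - x"
    using assms(2,3) by linarith
  ultimately have "int (coeff p a * coeff p b) \<le> int (coeff p x * coeff p (a + b - x))"
    using assms(2,3) by (simp add: int_coeff_def)
  then show ?thesis by linarith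
qed

text \<open>With \<open>k\<close> the index of a maximal coefficient, \<open>pf2_coeff_le\<close> applied with an outer
  index at \<open>k\<close> compares two coefficients on the same side of \<open>k\<close>.\<close>
lemma pf2_imp_unimodal:
  assumes pf2: "pf2 (int_coeff p)"
  shows "unimodal p"
proof -
  obtain k where k: "k \<le> degree p" and max_deg: "\<forall>i\<le>degree p. coeff p i \<le> coeff p k"
    using Max_in[of "coeff p ` {..degree p}"] Max_ge[of "coeff p ` {..degree p}"] by fastforce
  have max: "coeff p i \<le> coeff p k" for i
    using max_deg by (cases "i \<le> degree p") (auto simp: coeff_eq_0)
  have up: "coeff p i \<le> coeff p j" if "i \<le> j" "j \<le> k" for i j
  proof (cases "coeff p k = 0")
    case True
    then show ?thesis using max[of i] by simp
  next
    case False
    have "coeff p i * coeff p k \<le> coeff p j * coeff p (i + k - j)"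
      using pf2_coeff_le[OF pf2] that by simp
    also have "\<dots> \<le> coeff p j * coeff p k"
      using max by (simp add: mult_le_mono2)
    finally show ?thesis using False by simp
  qed
  have down: "coeff p j \<le> coeff p i" if "k \<le> i" "i \<le> j" for i j
  proof (cases "coeff p k = 0")
    case True
    then show ?thesis using max[of j] by simp
  next
    case False
    have "coeff p k * coeff p j \<le> coeff p i * coeff p (k + j - i)"
      using pf2_coeff_le[OF pf2] that by simp
    also have "\<dots> \<le> coeff p i * coeff p k"
      using max by (simp add: mult_le_mono2)
    finally show ?thesis using False by (simp add: mult.commute)
  qed
  show ?thesis unfolding unimodal_def using up down by blast
qed

section \<open>Size generating functions of set families\<close>

definition card_gf :: "'a set set \<Rightarrow> nat poly" where
  "card_gf F = (\<Sum>D\<in>F. monom 1 (card D))"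

lemma coeff_card_gf: "finite F \<Longrightarrow> coeff (card_gf F) i = card {D\<in>F. card D = i}"
  by (simp add: card_gf_def coeff_sum coeff_monom sum.inter_filter[symmetric])

lemma total_dom_poly_eq_card_gf:
  assumes "finite V"
  shows "total_dom_poly V E = card_gf {D. is_total_dom_set V E D}"
proof (rule poly_eqI)
  fix i
  have fin: "finite {D. is_total_dom_set V E D}"
    by (rule finite_subset[of _ "Pow V"]) (use assms in \<open>auto simp: is_total_dom_set_def\<close>)
  have "d_t V E i = 0" if "card V < i"
  proof -
    have "card D \<le> card V" if "is_total_dom_set V E D" for D
      using that assms by (intro card_mono) (auto simp: is_total_dom_set_def)
    then have "{D. is_total_dom_set V E D \<and> card D = i} = {}"
      using \<open>card V < i\<close> by fastforce
    then show ?thesis unfolding d_t_def by (metis card.empty)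
  qed
  then have "coeff (total_dom_poly V E) i = d_t V E i"
    by (auto simp: total_dom_poly_def coeff_sum coeff_monom)
  then show "coeff (total_dom_poly V E) i = coeff (card_gf {D. is_total_dom_set V E D}) i"
    by (simp add: coeff_card_gf[OF fin] d_t_def)
qed

lemma card_gf_insert_image:
  assumes "\<forall>D\<in>F. finite D \<and> c \<notin> D"
  shows "card_gf (insert c ` F) = monom 1 1 * card_gf F"
proof -
  have "inj_on (insert c) F"
    using assms by (intro inj_onI) (metis insert_ident)
  then show ?thesis
    using assms by (simp add: card_gf_def sum.reindex sum_distrib_left mult_monom)
qed

lemma card_gf_Pow: "finite L \<Longrightarrow> card_gf (Pow L) = [:1, 1:] ^ card L"
proof (induction L rule: finite_induct)
  case empty
  show ?case by (simp add: card_gf_def del: One_nat_def)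
next
  case (insert c L)
  have fin: "finite (Pow L)" "finite (insert c ` Pow L)"
    using insert.hyps by simp_all
  have disj: "Pow L \<inter> insert c ` Pow L = {}"
    using insert.hyps by auto
  have "card_gf (Pow (insert c L)) = card_gf (Pow L) + card_gf (insert c ` Pow L)"
    unfolding Pow_insert card_gf_def using fin disj by (rule sum.union_disjoint)
  also have "card_gf (insert c ` Pow L) = monom 1 1 * card_gf (Pow L)"
    using insert.hyps by (intro card_gf_insert_image) (auto intro: finite_subset)
  finally show ?case
    using insert by (simp add: monom_altdef algebra_simps del: One_nat_def)
qed

lemma int_coeff_card_gf_remove_empty:
  assumes "finite F" "\<forall>D\<in>F. finite D"
  shows "int_coeff (card_gf (F - {{}})) = (\<lambda>z. if 1 \<le> z then int_coeff (card_gf F) z else 0)"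
proof -
  have "coeff (card_gf (F - {{}})) n = (if n = 0 then 0 else coeff (card_gf F) n)" for n
  proof -
    have "{D \<in> F - {{}}. card D = n} = (if n = 0 then {} else {D \<in> F. card D = n})"
      using assms(2) by auto
    then show ?thesis using assms(1) by (simp add: coeff_card_gf)
  qed
  then show ?thesis by (auto simp: int_coeff_def fun_eq_iff)
qed

lemma card_gf_union_product:
  assumes "finite F" "finite G" "\<forall>A\<in>F. finite A \<and> A \<subseteq> U" "\<forall>B\<in>G. finite B \<and> B \<subseteq> W"
    "U \<inter> W = {}"
  shows "card_gf ((\<lambda>(A, B). A \<union> B) ` (F \<times> G)) = card_gf F * card_gf G"
proof -
  have inj: "inj_on (\<lambda>(A, B). A \<union> B) (F \<times> G)"
  proof (rule inj_onI, clarify)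
    fix A B A' B'
    assume "A \<in> F" "B \<in> G" "A' \<in> F" "B' \<in> G" "A \<union> B = A' \<union> B'"
    moreover from calculation have "A = (A \<union> B) \<inter> U" "A' = (A' \<union> B') \<inter> U"
      "B = (A \<union> B) \<inter> W" "B' = (A' \<union> B') \<inter> W"
      using assms(3-5) by blast+
    ultimately show "A = A' \<and> B = B'" by metis
  qed
  have "card_gf ((\<lambda>(A, B). A \<union> B) ` (F \<times> G)) = (\<Sum>x\<in>F \<times> G. monom 1 (card (fst x \<union> snd x)))"
    unfolding card_gf_def by (subst sum.reindex[OF inj]) (simp add: case_prod_unfold)
  also have "\<dots> = (\<Sum>x\<in>F \<times> G. monom 1 (card (fst x)) * monom 1 (card (snd x)))"
  proof (rule sum.cong[OF refl])
    fix x
    assume "x \<in> F \<times> G"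
    then have "card (fst x \<union> snd x) = card (fst x) + card (snd x)"
      using assms(3-5) by (intro card_Un_disjoint) (auto, blast)
    then show "monom 1 (card (fst x \<union> snd x)) = monom 1 (card (fst x)) * (monom 1 (card (snd x)) :: nat poly)"
      by (simp add: mult_monom)
  qed
  also have "\<dots> = card_gf F * card_gf G"
    unfolding card_gf_def sum_product by (simp add: sum.cartesian_product case_prod_unfold)
  finally show ?thesis .
qed

definition star_dom_sets :: "'a \<Rightarrow> 'a set \<Rightarrow> 'a set set" where
  "star_dom_sets c L = {D. D \<subseteq> insert c L \<and> c \<in> D \<and> D \<inter> L \<noteq> {}}"

lemma star_dom_sets_eq_insert_image:
  assumes "c \<notin> L"
  shows "star_dom_sets c L = insert c ` (Pow L - {{}})"
proof (intro equalityI subsetI)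
  fix D
  assume "D \<in> star_dom_sets c L"
  then have "D = insert c (D - {c})" "D - {c} \<in> Pow L - {{}}"
    using assms by (auto simp: star_dom_sets_def)
  then show "D \<in> insert c ` (Pow L - {{}})" by blast
qed (auto simp: star_dom_sets_def)

lemma finite_star_dom_sets: "finite L \<Longrightarrow> finite (star_dom_sets c L)"
  by (rule finite_subset[of _ "Pow (insert c L)"]) (auto simp: star_dom_sets_def)

lemma pf2_star_dom_sets:
  assumes "finite L" "c \<notin> L"
  shows "pf2 (int_coeff (card_gf (star_dom_sets c L)))"
proof -
  have subsets_finite: "\<forall>D\<in>Pow L. finite D"
    using assms(1) finite_subset by blast
  have "card_gf (star_dom_sets c L) = monom 1 1 * card_gf (Pow L - {{}})"
    unfolding star_dom_sets_eq_insert_image[OF assms(2)]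
    using subsets_finite assms(2) by (intro card_gf_insert_image) auto
  moreover have "pf2 (int_coeff (card_gf (Pow L - {{}})))"
    unfolding int_coeff_card_gf_remove_empty[OF finite_Pow_iff[THEN iffD2, OF assms(1)] subsets_finite]
    using pf2_int_coeff_binomial int_coeff_nonneg
    by (intro pf2_truncate) (simp_all add: card_gf_Pow assms(1))
  ultimately show ?thesis
    using pf2_int_coeff_X by (simp add: pf2_mult)
qed

section \<open>Lollipops and firecrackers\<close>

lemma total_dom_set_lollipop_iff:
  assumes "n \<ge> 1"
  shows "is_total_dom_set (lollipop_V n) (lollipop_E n) D \<longleftrightarrow> D \<in> star_dom_sets 0 {1..n}"
proof
  assume tds: "is_total_dom_set (lollipop_V n) (lollipop_E n) D"
  have V: "lollipop_V n = insert 0 {1..n}"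
    by (auto simp: lollipop_V_def)
  obtain u where "u \<in> D" "lollipop_E n n u"
    using tds unfolding is_total_dom_set_def lollipop_V_def by (meson atLeastAtMost_iff le0 order_refl)
  moreover from calculation have "u = 0"
    using assms by (auto simp: lollipop_E_def)
  moreover obtain w where "w \<in> D" "lollipop_E n 0 w"
    using tds unfolding is_total_dom_set_def lollipop_V_def by (meson atLeastAtMost_iff le0)
  moreover from calculation have "w \<in> {1..n}"
    by (auto simp: lollipop_E_def)
  ultimately show "D \<in> star_dom_sets 0 {1..n}"
    using tds V by (auto simp: is_total_dom_set_def star_dom_sets_def)
next
  assume "D \<in> star_dom_sets 0 {1..n}"
  then obtain l where D: "D \<subseteq> insert 0 {1..n}" "0 \<in> D" "l \<in> D" "l \<in> {1..n}"
    unfolding star_dom_sets_def by blast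
  have "\<exists>u\<in>D. lollipop_E n v u" if "v \<in> lollipop_V n" for v
  proof (cases "v = 0")
    case True
    then have "lollipop_E n v l" using D by (auto simp: lollipop_E_def)
    then show ?thesis using D by blast
  next
    case False
    then have "lollipop_E n v 0" using that assms by (auto simp: lollipop_E_def lollipop_V_def)
    then show ?thesis using D by blast
  qed
  moreover have "D \<subseteq> lollipop_V n"
    using D by (auto simp: lollipop_V_def)
  ultimately show "is_total_dom_set (lollipop_V n) (lollipop_E n) D"
    by (simp add: is_total_dom_set_def)
qed

lemma lollipop_unimodal:
  assumes "n \<ge> 1"
  shows "unimodal (total_dom_poly (lollipop_V n) (lollipop_E n))"
proof -
  have "total_dom_poly (lollipop_V n) (lollipop_E n) = card_gf {D. is_total_dom_set (lollipop_V n) (lollipop_E n) D}"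
    by (simp add: total_dom_poly_eq_card_gf lollipop_V_def)
  also have "{D. is_total_dom_set (lollipop_V n) (lollipop_E n) D} = star_dom_sets 0 {1..n}"
    using total_dom_set_lollipop_iff[OF assms] by blast
  finally show ?thesis
    by (simp add: pf2_imp_unimodal pf2_star_dom_sets)
qed

lemma finite_firecracker_V: "finite (firecracker_V ks)"
proof -
  have "firecracker_V ks = Sigma {..<length ks} (\<lambda>i. {..<ks ! i})"
    by (auto simp: firecracker_V_def)
  then show ?thesis by simp
qed

lemma firecracker_V_snoc:
  "firecracker_V (ks @ [k]) = firecracker_V ks \<union> Pair (length ks) ` {..<k}"
  by (auto simp: firecracker_V_def nth_append less_Suc_eq)

text \<open>When every star has at least three vertices these are the total dominating sets: a leaf
  other than the chosen one forces its centre, and the centre needs a neighbour, which is a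
  leaf of its own star.\<close>
definition firecracker_dom_sets :: "nat list \<Rightarrow> (nat \<times> nat) set set" where
  "firecracker_dom_sets ks = {D. D \<subseteq> firecracker_V ks \<and>
     (\<forall>i<length ks. D \<inter> Pair i ` {..<ks ! i} \<in> star_dom_sets (i, 0) (Pair i ` {1..<ks ! i}))}"

lemma total_dom_set_firecracker_iff:
  assumes "\<forall>k\<in>set ks. k \<ge> 3"
  shows "is_total_dom_set (firecracker_V ks) (firecracker_E ks) D \<longleftrightarrow> D \<in> firecracker_dom_sets ks"
proof
  assume tds: "is_total_dom_set (firecracker_V ks) (firecracker_E ks) D"
  have "D \<inter> Pair i ` {..<ks ! i} \<in> star_dom_sets (i, 0) (Pair i ` {1..<ks ! i})"
    if i: "i < length ks" for i
  proof -
    have "ks ! i \<ge> 3" using assms i by auto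
    then have "(i, 2) \<in> firecracker_V ks" "(i, 0) \<in> firecracker_V ks"
      using i by (simp_all add: firecracker_V_def)
    then obtain u w where "u \<in> D" "firecracker_E ks (i, 2) u" "w \<in> D" "firecracker_E ks (i, 0) w"
      using tds unfolding is_total_dom_set_def by blast
    moreover from calculation have "u = (i, 0)" "w \<in> Pair i ` {1..<ks ! i}"
      by (cases u, cases w, auto simp: firecracker_E_def firecracker_V_def)+
    ultimately show ?thesis
      by (auto simp: star_dom_sets_def)
  qed
  then show "D \<in> firecracker_dom_sets ks"
    using tds by (simp add: firecracker_dom_sets_def is_total_dom_set_def)
next
  assume D: "D \<in> firecracker_dom_sets ks"
  have "\<exists>u\<in>D. firecracker_E ks v u" if "v \<in> firecracker_V ks" for v
  proof -
    obtain i j where v: "v = (i, j)" "i < length ks" "j < ks ! i"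
      using \<open>v \<in> firecracker_V ks\<close> by (auto simp: firecracker_V_def)
    then have centre: "(i, 0) \<in> D" and "\<exists>l\<in>{1..<ks ! i}. (i, l) \<in> D"
      using D by (auto simp: firecracker_dom_sets_def star_dom_sets_def)
    then obtain l where leaf: "l \<in> {1..<ks ! i}" "(i, l) \<in> D"
      by blast
    show ?thesis
    proof (cases "j = 0")
      case True
      then have "firecracker_E ks v (i, l)"
        using v leaf by (simp add: firecracker_E_def firecracker_V_def)
      then show ?thesis using leaf by blast
    next
      case False
      then have "firecracker_E ks v (i, 0)"
        using v by (simp add: firecracker_E_def firecracker_V_def)
      then show ?thesis using centre by blast
    qed
  qed
  then show "is_total_dom_set (firecracker_V ks) (firecracker_E ks) D"
    using D by (simp add: firecracker_dom_sets_def is_total_dom_set_def)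
qed

lemma firecracker_dom_sets_snoc_restrict:
  assumes D: "D \<in> firecracker_dom_sets (ks @ [k])"
  shows "D \<inter> firecracker_V ks \<in> firecracker_dom_sets ks"
    and "D \<inter> Pair (length ks) ` {..<k} \<in> star_dom_sets (length ks, 0) (Pair (length ks) ` {1..<k})"
proof -
  show "D \<inter> firecracker_V ks \<in> firecracker_dom_sets ks"
    unfolding firecracker_dom_sets_def
  proof (intro CollectI conjI allI impI)
    show "D \<inter> firecracker_V ks \<subseteq> firecracker_V ks" by simp
    fix i
    assume i: "i < length ks"
    then have "(ks @ [k]) ! i = ks ! i"
      "D \<inter> firecracker_V ks \<inter> Pair i ` {..<ks ! i} = D \<inter> Pair i ` {..<ks ! i}"
      by (auto simp: firecracker_V_def nth_append)
    moreover have "D \<inter> Pair i ` {..<(ks @ [k]) ! i} \<in> star_dom_sets (i, 0) (Pair i ` {1..<(ks @ [k]) ! i})"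
      using D i by (simp add: firecracker_dom_sets_def)
    ultimately show "D \<inter> firecracker_V ks \<inter> Pair i ` {..<ks ! i} \<in> star_dom_sets (i, 0) (Pair i ` {1..<ks ! i})"
      by simp
  qed
  show "D \<inter> Pair (length ks) ` {..<k} \<in> star_dom_sets (length ks, 0) (Pair (length ks) ` {1..<k})"
    using D unfolding firecracker_dom_sets_def
    by (metis (no_types, lifting) length_append_singleton lessI mem_Collect_eq nth_append_length)
qed

lemma firecracker_dom_sets_snoc_Un:
  assumes k: "k \<ge> 1"
    and A: "A \<in> firecracker_dom_sets ks"
    and B: "B \<in> star_dom_sets (length ks, 0) (Pair (length ks) ` {1..<k})"
  shows "A \<union> B \<in> firecracker_dom_sets (ks @ [k])"
proof -
  let ?n = "length ks"
  have A_sub: "A \<subseteq> firecracker_V ks"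
    using A by (simp add: firecracker_dom_sets_def)
  have B_sub: "B \<subseteq> Pair ?n ` {..<k}"
    using B k by (auto simp: star_dom_sets_def)
  have "(A \<union> B) \<inter> Pair i ` {..<(ks @ [k]) ! i} = A \<inter> Pair i ` {..<ks ! i}" if "i < ?n" for i
    using that B_sub by (auto simp: nth_append)
  moreover have "(A \<union> B) \<inter> Pair ?n ` {..<k} = B"
    using A_sub B_sub by (auto simp: firecracker_V_def)
  ultimately have "(A \<union> B) \<inter> Pair i ` {..<(ks @ [k]) ! i}
      \<in> star_dom_sets (i, 0) (Pair i ` {1..<(ks @ [k]) ! i})" if "i < Suc ?n" for i
    using that A B by (cases "i = ?n") (auto simp: firecracker_dom_sets_def nth_append)
  moreover have "A \<union> B \<subseteq> firecracker_V (ks @ [k])"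
    using A_sub B_sub by (auto simp: firecracker_V_snoc)
  ultimately show ?thesis
    by (simp add: firecracker_dom_sets_def)
qed

lemma firecracker_dom_sets_snoc:
  assumes "k \<ge> 1"
  shows "firecracker_dom_sets (ks @ [k]) = (\<lambda>(A, B). A \<union> B) `
    (firecracker_dom_sets ks \<times> star_dom_sets (length ks, 0) (Pair (length ks) ` {1..<k}))"
proof (intro equalityI subsetI)
  fix D
  assume D: "D \<in> firecracker_dom_sets (ks @ [k])"
  then have "D = D \<inter> firecracker_V ks \<union> D \<inter> Pair (length ks) ` {..<k}"
    by (auto simp: firecracker_dom_sets_def firecracker_V_snoc)
  with firecracker_dom_sets_snoc_restrict[OF D]
  show "D \<in> (\<lambda>(A, B). A \<union> B) `
      (firecracker_dom_sets ks \<times> star_dom_sets (length ks, 0) (Pair (length ks) ` {1..<k}))"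
    by blast
qed (auto intro: firecracker_dom_sets_snoc_Un[OF assms])

lemma pf2_firecracker_dom_sets:
  "\<forall>k\<in>set ks. k \<ge> 1 \<Longrightarrow> pf2 (int_coeff (card_gf (firecracker_dom_sets ks)))"
proof (induction ks rule: rev_induct)
  case Nil
  have "firecracker_dom_sets [] = {{}}"
    by (auto simp: firecracker_dom_sets_def firecracker_V_def)
  then show ?case
    by (simp add: card_gf_def pf2_int_coeff_1 del: One_nat_def)
next
  case (snoc k ks)
  define n where "n = length ks"
  define S where "S = star_dom_sets (n, 0) (Pair n ` {1..<k})"
  have fin_dom_sets: "finite (firecracker_dom_sets ks)"
    by (rule finite_subset[of _ "Pow (firecracker_V ks)"])
      (auto simp: firecracker_dom_sets_def finite_firecracker_V)
  have k: "k \<ge> 1"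
    using snoc.prems by simp
  have "card_gf (firecracker_dom_sets (ks @ [k])) = card_gf (firecracker_dom_sets ks) * card_gf S"
    unfolding firecracker_dom_sets_snoc[OF k] S_def n_def
  proof (intro card_gf_union_product[where U="firecracker_V ks" and W="Pair n ` {..<k}"])
    show "\<forall>A\<in>firecracker_dom_sets ks. finite A \<and> A \<subseteq> firecracker_V ks"
      using finite_firecracker_V by (auto simp: firecracker_dom_sets_def intro: finite_subset)
    show "\<forall>B\<in>star_dom_sets (length ks, 0) (Pair (length ks) ` {1..<k}). finite B \<and> B \<subseteq> Pair n ` {..<k}"
      using k by (auto simp: star_dom_sets_def n_def intro: finite_subset)
    show "firecracker_V ks \<inter> Pair n ` {..<k} = {}"
      by (auto simp: firecracker_V_def n_def)
  qed (simp_all add: fin_dom_sets finite_star_dom_sets)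
  moreover have "pf2 (int_coeff (card_gf S))"
    unfolding S_def by (rule pf2_star_dom_sets) auto
  ultimately show ?case
    using snoc by (simp add: pf2_mult)
qed

lemma firecracker_unimodal:
  assumes "\<forall>k\<in>set ks. k \<ge> 3"
  shows "unimodal (total_dom_poly (firecracker_V ks) (firecracker_E ks))"
proof -
  have "total_dom_poly (firecracker_V ks) (firecracker_E ks)
      = card_gf {D. is_total_dom_set (firecracker_V ks) (firecracker_E ks) D}"
    by (simp add: total_dom_poly_eq_card_gf finite_firecracker_V)
  also have "{D. is_total_dom_set (firecracker_V ks) (firecracker_E ks) D} = firecracker_dom_sets ks"
    using total_dom_set_firecracker_iff[OF assms] by blast
  finally show ?thesis
    using assms by (auto intro!: pf2_imp_unimodal pf2_firecracker_dom_sets)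
qed

theorem mainTheorem8:
  fixes n k :: nat and ks :: "nat list"
  assumes "n \<ge> 1" and "k \<ge> 3" and "length ks = n" and "\<forall>x\<in>set ks. x \<ge> 3"
  shows "unimodal (total_dom_poly (lollipop_V n) (lollipop_E n))
       \<and> unimodal (total_dom_poly (firecracker_V (replicate n k)) (firecracker_E (replicate n k)))
       \<and> unimodal (total_dom_poly (firecracker_V ks) (firecracker_E ks))"
  using lollipop_unimodal[OF assms(1)] firecracker_unimodal[of "replicate n k"]
    firecracker_unimodal[OF assms(4)] assms(2)
  by simp

end
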